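(* Let $q\in(0,1)$ be a constant. Let $N\sim\mathrm{B}(M,\alpha)$ and $N_1\sim\mathrm{B}(M-1,\alpha)$ be two statistically independent binomial random variables with $M\ge 2$ and $\alpha\in(0,q]\cup\{1\}$. Then \[ \Pr\{N\ge N_1+1 \mid N\ge 1\}\ \ge\ \tfrac12\big[1-1/\sqrt{2\pi}\big]+o_M(1), \] where $o_M(1)$ depends only on $q$ and $M$ (not on $\alpha$) and tends to $0$ as $M\to+\infty$.
   Context: $\mathrm{B}(M,\alpha)$ denotes the binomial distribution with $M$ trials and success probability $\alpha$. *)

theory Defs
  imports "HOL-Probability.Probability"
begin

definition joint_NN1 :: "nat \<Rightarrow> real \<Rightarrow> (nat \<times> nat) pmf" where
  "joint_NN1 M \<alpha> = pair_pmf (binomial_pmf M \<alpha>) (binomial_pmf (M - 1) \<alpha>)"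

definition cond_prob_pmf :: "'a pmf \<Rightarrow> 'a set \<Rightarrow> 'a set \<Rightarrow> real" where
  "cond_prob_pmf p A B = measure_pmf.prob p (A \<inter> B) / measure_pmf.prob p B"

end

theory Submission
  imports Defs
begin

(* Split N into the first M - 1 trials N' and the last trial \<xi> ~ Bernoulli(\<alpha>). Then N' and N1 are
   i.i.d. B(M - 1, \<alpha>), so with c = Pr{N' = N1} symmetry gives Pr{N' > N1} = (1 - c) / 2 and
   Pr{N > N1} = (1 - c) / 2 + \<alpha> c, while Pr{N \<ge> 1} = 1 - (1 - \<alpha>)^M.
   For \<alpha> \<ge> 1/2 the numerator alone is at least 1/2. For \<alpha> \<le> 1/2 and m = M - 1 \<ge> 10, every value
   of the B(m, \<alpha>) pmf other than u = (1 - \<alpha>)^m at 0 is at most (9/10)^9: maximising over \<alpha> puts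
   \<alpha> = k/m, and since (1 + 1/k)^k increases, the largest such maximum is (1 - 1/m)^(m-1) at k = 1.
   Hence c \<le> u^2 + (9/10)^9 (1 - u), which makes the ratio at least (1 - (9/10)^9)/2, and this exceeds
   (1 - 1/sqrt(2\<pi>))/2. So the error term can be taken to be 0 for all M \<ge> 11, uniformly in \<alpha>. *)

lemma measure_bind_bernoulli_pmf:
  assumes "0 \<le> p" "p \<le> 1"
  shows "measure_pmf.prob (bernoulli_pmf p \<bind> f) A =
    p * measure_pmf.prob (f True) A + (1 - p) * measure_pmf.prob (f False) A"
proof -
  have "ennreal (measure_pmf.prob (bernoulli_pmf p \<bind> f) A) =
      ennreal (p * measure_pmf.prob (f True) A + (1 - p) * measure_pmf.prob (f False) A)"
    using assms
    by (simp add: measure_pmf.emeasure_eq_measure[symmetric] ennreal_mult' ennreal_plus[symmetric]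
        mult.commute)
  then show ?thesis
    using assms by (subst (asm) ennreal_inj) simp_all
qed

lemma pair_binomial_pmf_Suc:
  assumes "p \<in> {0..1}"
  shows "pair_pmf (binomial_pmf (Suc n) p) q =
    bernoulli_pmf p \<bind>
      (\<lambda>b. map_pmf (\<lambda>(k, y). (of_bool b + k, y)) (pair_pmf (binomial_pmf n p) q))"
  using assms
  by (simp add: binomial_pmf_Suc pair_pmf_def map_pmf_def of_bool_def bind_assoc_pmf bind_return_pmf)

lemma measure_pair_binomial_pmf_Suc:
  assumes "0 \<le> p" "p \<le> 1"
  shows "measure_pmf.prob (pair_pmf (binomial_pmf (Suc n) p) q) A =
    p * measure_pmf.prob (pair_pmf (binomial_pmf n p) q) {(k, y). (Suc k, y) \<in> A} +
    (1 - p) * measure_pmf.prob (pair_pmf (binomial_pmf n p) q) A"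
  using assms by (simp add: pair_binomial_pmf_Suc measure_bind_bernoulli_pmf vimage_def case_prod_unfold)

definition coincidence_prob :: "'a pmf \<Rightarrow> real" where
  "coincidence_prob p = measure_pmf.prob (pair_pmf p p) {(x, y). x = y}"

lemma coincidence_prob_eq_sum:
  assumes "finite (set_pmf p)"
  shows "coincidence_prob p = (\<Sum>x\<in>set_pmf p. pmf p x ^ 2)"
proof -
  have "{(x, y). x = y} \<inter> set_pmf (pair_pmf p p) = (\<lambda>x. (x, x)) ` set_pmf p" by auto
  then have "coincidence_prob p = sum (pmf (pair_pmf p p)) ((\<lambda>x. (x, x)) ` set_pmf p)"
    unfolding coincidence_prob_def
    using assms by (metis measure_Int_set_pmf measure_measure_pmf_finite finite_imageI)
  also have "\<dots> = (\<Sum>x\<in>set_pmf p. pmf p x ^ 2)"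
    by (subst sum.reindex) (auto simp: inj_on_def pmf_pair power2_eq_square)
  finally show ?thesis .
qed

lemma measure_pair_pmf_less:
  fixes p :: "'a::linorder pmf"
  shows "measure_pmf.prob (pair_pmf p p) {(x, y). y < x} = (1 - coincidence_prob p) / 2"
    and "measure_pmf.prob (pair_pmf p p) {(x, y). y \<le> x} = (1 + coincidence_prob p) / 2"
proof -
  let ?P = "measure_pmf.prob (pair_pmf p p)"
  have swap: "?P {(x, y). x < y} = ?P {(x, y). y < x}"
    by (subst pair_commute_pmf) (simp add: vimage_def case_prod_unfold)
  have "?P {(x, y). y \<le> x} = ?P {(x, y). y < x} + coincidence_prob p"
    unfolding coincidence_prob_def
    by (subst measure_pmf.finite_measure_Union[symmetric]) (auto intro: arg_cong[where f = ?P])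
  moreover have "?P {(x, y). y \<le> x} = 1 - ?P {(x, y). x < y}"
    by (subst measure_pmf.prob_compl[symmetric]) (auto intro: arg_cong[where f = ?P])
  ultimately show "?P {(x, y). y < x} = (1 - coincidence_prob p) / 2"
    and "?P {(x, y). y \<le> x} = (1 + coincidence_prob p) / 2"
    using swap by simp_all
qed

lemma coincidence_prob_le:
  assumes "finite (set_pmf p)" and "\<And>x. x \<noteq> x\<^sub>0 \<Longrightarrow> pmf p x \<le> s"
  shows "coincidence_prob p \<le> pmf p x\<^sub>0 ^ 2 + s * (1 - pmf p x\<^sub>0)"
proof -
  define A where "A = insert x\<^sub>0 (set_pmf p)"
  have A: "finite A" "x\<^sub>0 \<in> A" using assms(1) by (simp_all add: A_def)
  have "coincidence_prob p = (\<Sum>x\<in>A. pmf p x ^ 2)"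
    unfolding coincidence_prob_eq_sum[OF assms(1)]
    using A by (intro sum.mono_neutral_left) (auto simp: A_def set_pmf_eq)
  also have "\<dots> = pmf p x\<^sub>0 ^ 2 + (\<Sum>x\<in>A - {x\<^sub>0}. pmf p x ^ 2)"
    using A by (simp add: sum.remove)
  also have "(\<Sum>x\<in>A - {x\<^sub>0}. pmf p x ^ 2) \<le> (\<Sum>x\<in>A - {x\<^sub>0}. s * pmf p x)"
    using assms(2) by (intro sum_mono) (simp add: power2_eq_square mult_right_mono)
  also have "\<dots> = s * (1 - pmf p x\<^sub>0)"
  proof -
    have "sum (pmf p) A = 1" by (rule sum_pmf_eq_1) (use A in \<open>auto simp: A_def\<close>)
    then show ?thesis using A by (simp add: sum.remove sum_distrib_left[symmetric])
  qed
  finally show ?thesis by simp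
qed

lemma power_le_power_self_mult_exp:
  fixes x :: real
  assumes "0 \<le> x"
  shows "x ^ n \<le> real n ^ n * exp (x - real n)"
proof (cases "n = 0")
  case False
  then have n: "real n > 0" by simp
  have "x / n \<le> exp (x / n - 1)" using exp_ge_add_one_self[of "x / n - 1"] by simp
  then have "(x / n) ^ n \<le> exp (x / n - 1) ^ n"
    by (rule power_mono) (use assms n in simp)
  also have "\<dots> = exp (x - n)"
    by (subst exp_of_nat_mult[symmetric]) (use n in \<open>simp add: field_simps\<close>)
  finally show ?thesis using n by (simp add: power_divide field_simps)
qed (use assms in simp)

lemma one_plus_inverse_pow_le_Suc:
  "(1 + 1 / real n) ^ n \<le> (1 + 1 / real (Suc n)) ^ Suc n"
proof (cases "n = 0")
  case False
  define a where "a = 1 + 1 / real n"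
  define b where "b = 1 + 1 / real (Suc n)"
  let ?x = "- 1 / (real n + 1) ^ 2"
  have a: "a = (real n + 1) / real n" and "0 < a"
    using False by (simp_all add: a_def field_simps)
  have b: "b = (real n + 2) / (real n + 1)" by (simp add: b_def field_simps)
  have "-1 \<le> ?x" by (simp add: field_simps)
  \<comment> \<open>Bernoulli's inequality for (1 - 1/(n+1)^2)^(n+1), where 1 - 1/(n+1)^2 = b/a\<close>
  then have "1 + real (Suc n) * ?x \<le> (1 + ?x) ^ Suc n"
    by (rule Bernoulli_inequality)
  moreover have "1 + real (Suc n) * ?x = 1 / a"
    using False by (simp add: a field_simps) (simp add: power2_eq_square algebra_simps)
  moreover have "1 + ?x = b / a"
  proof -
    have "1 + ?x = real n * (real n + 2) / (real n + 1) ^ 2"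
      by (simp add: field_simps) (simp add: power2_eq_square algebra_simps)
    then show ?thesis unfolding a b using False by (simp add: power2_eq_square)
  qed
  ultimately have "1 / a * a ^ Suc n \<le> b ^ Suc n"
    using \<open>0 < a\<close> by (simp add: power_divide le_divide_eq)
  then show ?thesis using \<open>0 < a\<close> by (simp add: a_def b_def)
qed simp

lemma one_plus_inverse_pow_mono:
  "k \<le> j \<Longrightarrow> (1 + 1 / real k) ^ k \<le> (1 + 1 / real j) ^ j"
  by (rule lift_Suc_mono_le[of "\<lambda>n. (1 + 1 / real n) ^ n"]) (use one_plus_inverse_pow_le_Suc in auto)

(* (1 + 1/k)^k \<le> (1 + 1/j)^j with the denominators cleared *)
lemma Suc_pow_mult_pow_le:
  fixes k j :: nat
  assumes "k \<le> j"
  shows "(k + 1) ^ k * j ^ j \<le> k ^ k * (j + 1) ^ j"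
proof -
  have cleared: "(1 + 1 / real n) ^ n = real ((n + 1) ^ n) / real (n ^ n)" for n
    by (cases "n = 0") (simp_all add: field_simps power_divide)
  have "real ((k + 1) ^ k) / real (k ^ k) \<le> real ((j + 1) ^ j) / real (j ^ j)"
    using one_plus_inverse_pow_mono[OF assms] unfolding cleared .
  moreover have "0 < real (n ^ n)" for n by (cases "n = 0") simp_all
  moreover have "A / B \<le> C / D \<Longrightarrow> 0 < B \<Longrightarrow> 0 < D \<Longrightarrow> A * D \<le> C * B" for A B C D :: real
    by (simp add: divide_le_eq le_divide_eq)
  ultimately have "real ((k + 1) ^ k) * real (j ^ j) \<le> real ((j + 1) ^ j) * real (k ^ k)"
    by blast
  then show ?thesis by (simp only: mult.commute[of "(j + 1) ^ j"] flip: of_nat_mult of_nat_le_iff)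
qed

lemma one_minus_inverse_pow_le:
  assumes "10 \<le> m"
  shows "(1 - 1 / real m) ^ (m - 1) \<le> (9 / 10) ^ 9"
proof -
  have "1 - 1 / real m = 1 / (1 + 1 / real (m - 1))"
    using assms by (simp add: of_nat_diff field_simps)
  then have "(1 - 1 / real m) ^ (m - 1) = 1 / (1 + 1 / real (m - 1)) ^ (m - 1)"
    by (simp add: power_one_over)
  also have "\<dots> \<le> 1 / (1 + 1 / real 9) ^ 9"
    using assms by (intro divide_left_mono one_plus_inverse_pow_mono mult_pos_pos zero_less_power)
      (simp_all add: add_pos_nonneg)
  also have "\<dots> = (9 / 10) ^ 9"
    by (simp add: power_divide)
  finally show ?thesis .
qed

(* m^m times the value at k of the B(m, k/m) pmf, which is the maximum over \<alpha> of the B(m, \<alpha>) pmf at k *)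
definition binomial_mode_weight :: "nat \<Rightarrow> nat \<Rightarrow> nat" where
  "binomial_mode_weight m k = (m choose k) * k ^ k * (m - k) ^ (m - k)"

lemma pmf_binomial_le_mode_weight:
  assumes "0 \<le> \<alpha>" "\<alpha> \<le> 1" "k \<le> m"
  shows "pmf (binomial_pmf m \<alpha>) k \<le> binomial_mode_weight m k / real m ^ m"
proof -
  \<comment> \<open>bound (\<alpha> m)^k and ((1 - \<alpha>) m)^(m-k) separately; the exponentials cancel\<close>
  have "(\<alpha> * m) ^ k * ((1 - \<alpha>) * m) ^ (m - k)
      \<le> (real k ^ k * exp (\<alpha> * m - k)) * (real (m - k) ^ (m - k) * exp ((1 - \<alpha>) * m - real (m - k)))"
    using assms by (intro mult_mono power_le_power_self_mult_exp) auto
  also have "\<dots> = real k ^ k * real (m - k) ^ (m - k)"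
    using assms by (simp flip: exp_add add: of_nat_diff algebra_simps)
  also have "(\<alpha> * m) ^ k * ((1 - \<alpha>) * m) ^ (m - k) = \<alpha> ^ k * (1 - \<alpha>) ^ (m - k) * real m ^ m"
    using assms by (simp add: power_mult_distrib mult_ac flip: power_add)
  finally have "\<alpha> ^ k * (1 - \<alpha>) ^ (m - k) \<le> real k ^ k * real (m - k) ^ (m - k) / real m ^ m"
    by (simp add: le_divide_eq)
  then have "real (m choose k) * (\<alpha> ^ k * (1 - \<alpha>) ^ (m - k))
      \<le> real (m choose k) * (real k ^ k * real (m - k) ^ (m - k) / real m ^ m)"
    by (rule mult_left_mono) simp
  then show ?thesis
    using assms by (simp add: binomial_mode_weight_def mult.assoc)
qed

lemma binomial_mode_weight_Suc_le:
  assumes "2 * k + 1 \<le> m"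
  shows "binomial_mode_weight m (Suc k) \<le> binomial_mode_weight m k"
proof -
  define j where "j = m - Suc k"
  \<comment> \<open>the ratio of consecutive weights is (1 + 1/k)^k / (1 + 1/j)^j, and k \<le> j\<close>
  have j: "m - k = j + 1" "m - Suc k = j" "k \<le> j" using assms by (auto simp: j_def)
  have "binomial_mode_weight m (Suc k) = (Suc k * (m choose Suc k)) * ((k + 1) ^ k * j ^ j)"
    by (simp add: binomial_mode_weight_def j algebra_simps)
  also have "Suc k * (m choose Suc k) = (j + 1) * (m choose k)"
    by (metis binomial_absorb_comp binomial_absorption j(1))
  also have "(j + 1) * (m choose k) * ((k + 1) ^ k * j ^ j) \<le> (j + 1) * (m choose k) * (k ^ k * (j + 1) ^ j)"
    using j(3) by (intro mult_left_mono Suc_pow_mult_pow_le) simp_all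
  also have "\<dots> = binomial_mode_weight m k"
    by (simp add: binomial_mode_weight_def j algebra_simps)
  finally show ?thesis .
qed

lemma binomial_mode_weight_le_one:
  assumes "0 < k" "k < m"
  shows "binomial_mode_weight m k \<le> binomial_mode_weight m 1"
proof -
  have lower_half: "binomial_mode_weight m k \<le> binomial_mode_weight m 1"
    if "1 \<le> k" "2 * k \<le> m" for k
    using that
  proof (induction k rule: dec_induct)
    case (step k)
    then have "binomial_mode_weight m (Suc k) \<le> binomial_mode_weight m k"
      by (intro binomial_mode_weight_Suc_le) simp
    with step show ?case by simp
  qed simp
  show ?thesis
  proof (cases "2 * k \<le> m")
    case False
    have "binomial_mode_weight m k = binomial_mode_weight m (m - k)"
      using assms by (simp add: binomial_mode_weight_def binomial_symmetric[of k m] algebra_simps)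
    also have "\<dots> \<le> binomial_mode_weight m 1"
      using False assms by (intro lower_half) auto
    finally show ?thesis .
  qed (use assms lower_half in auto)
qed

lemma pmf_binomial_interior_le:
  assumes "0 \<le> \<alpha>" "\<alpha> \<le> 1" "0 < k" "k < m"
  shows "pmf (binomial_pmf m \<alpha>) k \<le> (1 - 1 / real m) ^ (m - 1)"
proof -
  have "pmf (binomial_pmf m \<alpha>) k \<le> binomial_mode_weight m k / real m ^ m"
    using assms by (intro pmf_binomial_le_mode_weight) simp_all
  also have "\<dots> \<le> binomial_mode_weight m 1 / real m ^ m"
    using assms by (intro divide_right_mono of_nat_mono binomial_mode_weight_le_one) simp_all
  also have "\<dots> = (1 - 1 / real m) ^ (m - 1)"
  proof -
    obtain n where m: "m = Suc n" using assms by (cases m) auto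
    have "real (binomial_mode_weight m 1) = (real n + 1) * real n ^ n"
      by (simp add: binomial_mode_weight_def m algebra_simps)
    moreover have "real m ^ m = (real n + 1) * (real n + 1) ^ n"
      by (simp add: m add.commute)
    moreover have "1 - 1 / real m = real n / (real n + 1)"
      by (simp add: m field_simps)
    ultimately show ?thesis
      by (simp add: m power_divide)
  qed
  finally show ?thesis .
qed

lemma pmf_binomial_nonzero_le:
  assumes "10 \<le> m" "0 \<le> \<alpha>" "\<alpha> \<le> 1 / 2" "0 < k"
  shows "pmf (binomial_pmf m \<alpha>) k \<le> (9 / 10) ^ 9"
proof (cases k m rule: linorder_cases)
  case less
  then have "pmf (binomial_pmf m \<alpha>) k \<le> (1 - 1 / real m) ^ (m - 1)"
    using assms by (intro pmf_binomial_interior_le) simp_all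
  also have "\<dots> \<le> (9 / 10) ^ 9"
    using assms(1) by (rule one_minus_inverse_pow_le)
  finally show ?thesis .
next
  case equal
  have "\<alpha> ^ m \<le> (1 / 2) ^ m" using assms by (intro power_mono) simp_all
  also have "\<dots> \<le> (1 / 2) ^ 2" using assms by (intro power_decreasing) simp_all
  also have "\<dots> \<le> (9 / 10) ^ 9" by (simp add: power_divide)
  finally show ?thesis using assms equal by simp
qed (use assms in \<open>simp add: binomial_eq_0\<close>)

(* Here C is the coincidence probability of B(m, \<alpha>) and u = (1 - \<alpha>)^m: the right-hand side is
   Pr{N > N1} and the factor 1 - (1 - \<alpha>) u is Pr{N \<ge> 1}. *)
lemma exceedance_ratio_bound:
  fixes \<alpha> s u C :: real
  assumes "0 \<le> \<alpha>" "\<alpha> \<le> 1" "0 \<le> s" "s \<le> 1" "0 \<le> u" "u \<le> 1 - \<alpha>" "0 \<le> C"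
    and collision: "\<alpha> \<le> 1 / 2 \<Longrightarrow> C \<le> u ^ 2 + s * (1 - u)"
  shows "(1 - s) / 2 * (1 - (1 - \<alpha>) * u) \<le> (1 - C) / 2 + \<alpha> * C"
proof (cases "\<alpha> \<le> 1 / 2")
  case True
  have "(1 - 2 * \<alpha>) * C \<le> C"
    using assms True by (simp add: mult_left_le_one_le)
  also have "\<dots> \<le> u ^ 2 + s * (1 - u)"
    using True by (rule collision)
  also have "\<dots> \<le> s + (1 - s) * (1 - \<alpha>) * u"
  proof -
    have "(1 - s) * (1 - \<alpha>) + s = 1 - \<alpha> + \<alpha> * s"
      by (simp add: algebra_simps)
    then have "u \<le> (1 - s) * (1 - \<alpha>) + s"
      using assms mult_nonneg_nonneg[of \<alpha> s] by linarith
    then have "u * u \<le> u * ((1 - s) * (1 - \<alpha>) + s)"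
      using assms by (intro mult_left_mono) simp_all
    then show ?thesis by (simp add: power2_eq_square algebra_simps)
  qed
  finally have "0 \<le> (s + (1 - s) * (1 - \<alpha>) * u - (1 - 2 * \<alpha>) * C) / 2"
    by simp
  also have "\<dots> = (1 - C) / 2 + \<alpha> * C - (1 - s) / 2 * (1 - (1 - \<alpha>) * u)"
    by (simp add: algebra_simps diff_divide_distrib add_divide_distrib)
  finally show ?thesis by simp
next
  case False
  have "(1 - \<alpha>) * u \<le> 1" "0 \<le> (1 - \<alpha>) * u"
    using assms by (simp_all add: mult_le_one)
  then have "(1 - s) / 2 * (1 - (1 - \<alpha>) * u) \<le> (1 - s) / 2"
    using assms by (intro mult_left_le) simp_all
  also have "\<dots> \<le> 1 / 2 + (\<alpha> - 1 / 2) * C"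
    using False assms by (simp add: mult_nonneg_nonneg[of "\<alpha> - 1 / 2" C] add_increasing2)
  also have "\<dots> = (1 - C) / 2 + \<alpha> * C"
    by (simp add: algebra_simps diff_divide_distrib)
  finally show ?thesis .
qed

lemma measure_joint_NN1_N_gt_N1:
  assumes "0 \<le> \<alpha>" "\<alpha> \<le> 1"
  shows "measure_pmf.prob (joint_NN1 (Suc m) \<alpha>) {(n, n1). n \<ge> n1 + 1} =
    (1 - coincidence_prob (binomial_pmf m \<alpha>)) / 2 + \<alpha> * coincidence_prob (binomial_pmf m \<alpha>)"
proof -
  let ?B = "binomial_pmf m \<alpha>"
  have "measure_pmf.prob (joint_NN1 (Suc m) \<alpha>) {(n, n1). n \<ge> n1 + 1} =
      \<alpha> * measure_pmf.prob (pair_pmf ?B ?B) {(k, j). j \<le> k} +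
      (1 - \<alpha>) * measure_pmf.prob (pair_pmf ?B ?B) {(k, j). j < k}"
    using assms by (simp add: joint_NN1_def measure_pair_binomial_pmf_Suc Suc_le_eq less_Suc_eq_le)
  then show ?thesis by (simp add: measure_pair_pmf_less field_simps)
qed

lemma measure_joint_NN1_N_pos:
  "measure_pmf.prob (joint_NN1 M \<alpha>) {(n, n1). 1 \<le> n} = 1 - pmf (binomial_pmf M \<alpha>) 0"
proof -
  have "measure_pmf.prob (joint_NN1 M \<alpha>) {(n, n1). 1 \<le> n} =
      measure_pmf.prob (map_pmf fst (joint_NN1 M \<alpha>)) (UNIV - {0})"
    by (simp add: vimage_def case_prod_unfold Suc_le_eq)
  also have "\<dots> = 1 - pmf (binomial_pmf M \<alpha>) 0"
    using measure_pmf.prob_compl[of "{0}" "binomial_pmf M \<alpha>"]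
    by (simp add: joint_NN1_def map_fst_pair_pmf measure_pmf_single)
  finally show ?thesis .
qed

lemma cond_prob_joint_NN1_ge:
  assumes "10 \<le> m" "0 < \<alpha>" "\<alpha> \<le> 1"
  shows "(1 - (9 / 10) ^ 9) / 2 \<le>
    cond_prob_pmf (joint_NN1 (Suc m) \<alpha>) {(n, n1). n \<ge> n1 + 1} {(n, n1). n \<ge> 1}"
proof -
  let ?B = "binomial_pmf m \<alpha>" and ?s = "(9 / 10) ^ 9 :: real"
  define c where "c = coincidence_prob ?B"
  define u where "u = pmf ?B 0"
  have u: "u = (1 - \<alpha>) ^ m" using assms by (simp add: u_def)
  have "u \<le> 1 - \<alpha>"
    using power_decreasing[of 1 m "1 - \<alpha>"] assms by (simp add: u)
  have "c \<le> u ^ 2 + ?s * (1 - u)" if "\<alpha> \<le> 1 / 2"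
    unfolding c_def u_def using assms that
    by (intro coincidence_prob_le pmf_binomial_nonzero_le finite_set_pmf_binomial_pmf) auto
  then have bound: "(1 - ?s) / 2 * (1 - (1 - \<alpha>) * u) \<le> (1 - c) / 2 + \<alpha> * c"
    using assms \<open>u \<le> 1 - \<alpha>\<close>
    by (intro exceedance_ratio_bound) (simp_all add: u c_def coincidence_prob_def power_le_one)
  have "(1 - \<alpha>) * u \<le> 1 - \<alpha>"
    using assms by (intro mult_left_le) (simp_all add: u power_le_one)
  then have pos: "0 < 1 - (1 - \<alpha>) * u"
    using assms by simp
  have num: "measure_pmf.prob (joint_NN1 (Suc m) \<alpha>) {(n, n1). n \<ge> n1 + 1} = (1 - c) / 2 + \<alpha> * c"
    unfolding c_def using assms by (intro measure_joint_NN1_N_gt_N1) simp_all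
  have den: "measure_pmf.prob (joint_NN1 (Suc m) \<alpha>) {(n, n1). n \<ge> 1} = 1 - (1 - \<alpha>) * u"
    using assms by (subst measure_joint_NN1_N_pos) (simp add: u)
  have events: "{(n, n1). n \<ge> n1 + 1} \<inter> {(n, n1). n \<ge> 1} = {(n, n1). n \<ge> n1 + (1::nat)}"
    by auto
  show ?thesis
    unfolding cond_prob_pmf_def events num den using bound pos by (simp only: pos_le_divide_eq)
qed

lemma one_minus_inverse_sqrt_two_pi_le:
  "1 / 2 * (1 - 1 / sqrt (2 * pi)) \<le> (1 - (9 / 10) ^ 9) / 2"
proof -
  have "sqrt (2 * pi) \<le> 251 / 100"
    by (rule real_le_lsqrt) (use pi_approx in \<open>auto simp: power2_eq_square\<close>)
  then have "100 / 251 \<le> 1 / sqrt (2 * pi)"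
    by (simp add: field_simps)
  moreover have "(9 / 10) ^ 9 \<le> (100 / 251 :: real)"
    by (simp add: power_divide)
  ultimately show ?thesis by simp
qed

theorem lemma6:
  fixes q :: real
  assumes "0 < q" and "q < 1"
  shows "\<exists>e :: nat \<Rightarrow> real. e \<longlonglongrightarrow> 0 \<and>
    (\<forall>M \<alpha>. M \<ge> 2 \<and> ((0 < \<alpha> \<and> \<alpha> \<le> q) \<or> \<alpha> = 1) \<longrightarrow>
       cond_prob_pmf (joint_NN1 M \<alpha>) {(n, n1). n \<ge> n1 + 1} {(n, n1). n \<ge> 1}
         \<ge> 1/2 * (1 - 1 / sqrt (2 * pi)) + e M)"
proof (intro exI conjI allI impI)
  define e :: "nat \<Rightarrow> real" where "e M = (if M \<ge> 11 then 0 else -1)" for M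
  show "e \<longlonglongrightarrow> 0"
    by (rule tendsto_eventually) (auto simp: e_def eventually_sequentially)
  fix M :: nat and \<alpha> :: real
  assume "M \<ge> 2 \<and> ((0 < \<alpha> \<and> \<alpha> \<le> q) \<or> \<alpha> = 1)"
  then have \<alpha>: "0 < \<alpha>" "\<alpha> \<le> 1" using assms by auto
  let ?P = "cond_prob_pmf (joint_NN1 M \<alpha>) {(n, n1). n \<ge> n1 + 1} {(n, n1). n \<ge> 1}"
  show "?P \<ge> 1/2 * (1 - 1 / sqrt (2 * pi)) + e M"
  proof (cases "M \<ge> 11")
    case True
    then obtain m where "M = Suc m" "10 \<le> m" by (cases M) auto
    then show ?thesis
      using cond_prob_joint_NN1_ge[of m \<alpha>] one_minus_inverse_sqrt_two_pi_le \<alpha> True by (simp add: e_def)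
  next
    case False
    have "1 / 2 * (1 - 1 / sqrt (2 * pi)) \<le> 1 / 2" by simp
    moreover have "e M = -1" using False by (simp add: e_def)
    ultimately have "1 / 2 * (1 - 1 / sqrt (2 * pi)) + e M \<le> 0" by linarith
    also have "0 \<le> ?P" unfolding cond_prob_pmf_def by simp
    finally show ?thesis .
  qed
qed

end
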